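(* Suppose $J$ satisfies (J) and $J(r)=0$ for all $r\ge K_*$, for some $K_*>0$. Then there exist constants $L_0>0$ and $C>0$ such that for all $r\ge L_0$: $|\tilde J(r,\rho)-J_*(r-\rho)|\le C r^{-1}$ when $\rho\in[r-K_*,r+K_*]$, and $\tilde J(r,\rho)=J_*(r-\rho)=0$ when $\rho>0$, $\rho\notin[r-K_*,r+K_*]$.
   Context: $N\ge2$, $B_\rho=\{|x|<\rho\}\subset\mathbb R^N$. (J): $J\in C(\mathbb R_+)\cap L^\infty(\mathbb R_+)$, $J\ge0$, $J(0)>0$, $\int_{\mathbb R^N}J(|x|)dx=1$. $\tilde J(r,\rho)=\int_{\partial B_\rho}J(|x-y|)dS_y$ for $|x|=r$. $J_*(l)=\int_{\mathbb R^{N-1}}J(|(l,x')|)dx'$, $l\in\mathbb R$, $x'\in\mathbb R^{N-1}$. *)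

theory Defs
  imports "HOL-Analysis.Analysis"
begin

text \<open>We model R^N as the product type real \<times> 'a, where 'a is a Euclidean space of
dimension N-1 (so N = DIM(real \<times> 'a) \<ge> 2 automatically). The first coordinate plays the
role of l in J_*(l).\<close>

definition kernel_J :: "('a::euclidean_space) itself \<Rightarrow> (real \<Rightarrow> real) \<Rightarrow> bool" where
  "kernel_J _ J \<longleftrightarrow>
     continuous_on {0..} J \<and> bounded (J ` {0..}) \<and> (\<forall>r\<ge>0. J r \<ge> 0) \<and> J 0 > 0 \<and>
     integrable lborel (\<lambda>x::real \<times> 'a. J (norm x)) \<and>
     (\<integral>x. J (norm (x::real \<times> 'a)) \<partial>lborel) = 1"

text \<open>Surface integral over the sphere of radius rho centred at 0, with respect to the
(N-1)-dimensional surface measure, expressed through the cone-measure construction: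
sigma_rho(A) = (N/rho) * Lebesgue measure of {t y. y \<in> A, 0 \<le> t \<le> 1}, i.e. sigma_rho is
(N/rho) times the push-forward of Lebesgue measure on the ball B_rho under y \<mapsto> rho y/|y|.\<close>
definition sphere_integral :: "real \<Rightarrow> ('b::euclidean_space \<Rightarrow> real) \<Rightarrow> real" where
  "sphere_integral \<rho> f =
     (real DIM('b) / \<rho>) * (LINT y : ball 0 \<rho> | lborel. f ((\<rho> / norm y) *\<^sub>R y))"

definition Jtilde :: "(real \<Rightarrow> real) \<Rightarrow> (real \<times> 'a::euclidean_space) \<Rightarrow> real \<Rightarrow> real" where
  "Jtilde J x \<rho> = sphere_integral \<rho> (\<lambda>y::real \<times> 'a. J (norm (x - y)))"

definition Jstar :: "('a::euclidean_space) itself \<Rightarrow> (real \<Rightarrow> real) \<Rightarrow> real \<Rightarrow> real" where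
  "Jstar _ J l = (\<integral>x'. J (norm (l, x'::'a)) \<partial>lborel)"

end

(* After a rotation we may take x = (r, 0); Lebesgue measure is invariant under orthogonal maps
   (via the Vitali covering theorem).  Points y of the sphere of radius rho with y_1 > 0 are
   parametrised by their slope a = |y'| / y_1: then |x - y|^2 = r^2 + rho^2 - 2 r rho / sqrt (1 + a^2),
   and Jtilde becomes a one-dimensional integral in a, while J_*(r - rho) is the radial integral in
   u of J (sqrt ((r - rho)^2 + u^2)).  The substitution u = g(a) with (r - rho)^2 + g(a)^2 = |x - y|^2
   makes the arguments of J coincide, so only the two densities differ; for |r - rho| <= K they
   agree up to a factor 1 + O(1/r) on the support a <= 1 of the integrand, and J_* <= sup J * |B_K|.
   For |r - rho| > K both quantities vanish, since |x - y| >= |r - rho| and J is supported in [0, K]. *)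

theory Submission
  imports Defs
begin

lemma emeasure_distr_norm_atMost:
  "emeasure (distr (lborel::'a::euclidean_space measure) borel norm) {..a} =
    ennreal (unit_ball_vol (real DIM('a)) * (max 0 a) ^ DIM('a))"
proof (cases "a < 0")
  case True
  then have "(norm -` {..a} :: 'a set) = {}" by (auto dest: order_trans[OF norm_ge_zero])
  then show ?thesis using True by (simp add: emeasure_distr)
next
  case False
  then have "(norm -` {..a} :: 'a set) = cball 0 a" by (auto simp: dist_norm)
  then show ?thesis using False by (simp add: emeasure_distr emeasure_cball)
qed

definition sphere_area :: "nat \<Rightarrow> real \<Rightarrow> real" where
  "sphere_area m u = real m * unit_ball_vol (real m) * u ^ (m - 1)"

lemma borel_measurable_sphere_area [measurable]: "sphere_area m \<in> borel_measurable borel"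
  unfolding sphere_area_def[abs_def] by measurable

lemma emeasure_radial_density_atMost:
  defines "m \<equiv> DIM('a::euclidean_space)"
  shows "emeasure (density lborel (\<lambda>u. ennreal (sphere_area m u) * indicator {0..} u)) {..a} =
    ennreal (unit_ball_vol (real m) * (max 0 a) ^ m)"
proof -
  have m: "1 \<le> m" unfolding m_def using DIM_positive by (simp add: Suc_le_eq)
  have "emeasure (density lborel (\<lambda>u. ennreal (sphere_area m u) * indicator {0..} u)) {..a} =
      (\<integral>\<^sup>+u. ennreal (sphere_area m u) * indicator {0..a} u \<partial>lborel)"
    by (simp add: emeasure_density mult.assoc) (intro nn_integral_cong, auto simp: indicator_def)
  also have "\<dots> = ennreal (unit_ball_vol (real m) * (max 0 a) ^ m)"
  proof (cases "a < 0")
    case False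
    have "(\<integral>\<^sup>+u. ennreal (sphere_area m u) * indicator {0..a} u \<partial>lborel) =
        ennreal (unit_ball_vol (real m) * a ^ m - unit_ball_vol (real m) * 0 ^ m)"
      using False by (intro nn_integral_FTC_Icc) (auto intro!: derivative_eq_intros simp: sphere_area_def)
    then show ?thesis using False m by simp
  qed (use m in simp)
  finally show ?thesis .
qed

lemma distr_norm_lborel:
  defines "m \<equiv> DIM('a::euclidean_space)"
  shows "distr (lborel::'a measure) borel norm =
    density lborel (\<lambda>u. ennreal (sphere_area m u) * indicator {0..} u)"
proof (rule measure_eqI_generator_eq[where E="range atMost" and \<Omega>=UNIV and A="\<lambda>i. {..real i}"])
  have "sets (borel::real measure) = sigma_sets UNIV (range atMost)"
    by (subst borel_eq_atMost) (simp add: sets_measure_of)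
  then show "sets (distr lborel borel norm) = sigma_sets UNIV (range atMost)"
    "sets (density lborel (\<lambda>u. ennreal (sphere_area m u) * indicator {0..} u)) =
      sigma_sets UNIV (range atMost)"
    by simp_all
  show "emeasure (distr (lborel::'a measure) borel norm) X =
      emeasure (density lborel (\<lambda>u. ennreal (sphere_area m u) * indicator {0..} u)) X"
    if X: "X \<in> range atMost" for X
  proof -
    obtain a where "X = {..a}" using X by auto
    then show ?thesis unfolding m_def by (simp only: emeasure_distr_norm_atMost emeasure_radial_density_atMost)
  qed
  show "emeasure (distr (lborel::'a measure) borel norm) {..real i} \<noteq> \<infinity>" for i
    by (simp add: emeasure_distr_norm_atMost)
qed (auto simp: Int_stable_def intro: real_arch_simple)

lemma nn_integral_radial:
  fixes g :: "real \<Rightarrow> ennreal"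
  assumes [measurable]: "g \<in> borel_measurable borel"
  defines "m \<equiv> DIM('a::euclidean_space)"
  shows "(\<integral>\<^sup>+z. g (norm (z::'a)) \<partial>lborel) =
    (\<integral>\<^sup>+u. g u * ennreal (sphere_area m u) * indicator {0..} u \<partial>lborel)"
proof -
  have "(\<integral>\<^sup>+z. g (norm (z::'a)) \<partial>lborel) = (\<integral>\<^sup>+u. g u \<partial>distr (lborel::'a measure) borel norm)"
    by (simp add: nn_integral_distr)
  also have "\<dots> = (\<integral>\<^sup>+u. ennreal (sphere_area m u) * indicator {0..} u * g u \<partial>lborel)"
    unfolding distr_norm_lborel m_def by (subst nn_integral_density) auto
  finally show ?thesis by (simp add: mult_ac)
qed

lemma open_eq_disjoint_balls_Un_null:
  fixes S :: "'b::euclidean_space set"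
  assumes "open S"
  obtains C :: "('b \<times> real) set" and N where "countable C" "\<And>i. i \<in> C \<Longrightarrow> 0 < snd i"
    "disjoint_family_on (\<lambda>i. ball (fst i) (snd i)) C" "N \<in> null_sets lborel"
    "S = (\<Union>i\<in>C. ball (fst i) (snd i)) \<union> N"
proof -
  define K where "K = {i::'b \<times> real. 0 < snd i \<and> ball (fst i) (snd i) \<subseteq> S}"
  have cover: "\<exists>i. i \<in> K \<and> x \<in> ball (fst i) (snd i) \<and> snd i < d" if "x \<in> S" "0 < d" for x d
  proof -
    obtain e where "0 < e" "ball x e \<subseteq> S" using assms \<open>x \<in> S\<close> open_contains_ball by blast
    then show ?thesis using \<open>0 < d\<close> by (intro exI[of _ "(x, min e (d / 2))"]) (auto simp: K_def)
  qed
  obtain C where C: "countable C" "C \<subseteq> K"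
     "pairwise (\<lambda>i j. disjnt (ball (fst i) (snd i)) (ball (fst j) (snd j))) C"
     "negligible (S - (\<Union>i \<in> C. ball (fst i) (snd i)))"
    by (rule Vitali_covering_theorem_balls[of S K fst snd, OF cover])
  define N where "N = S - (\<Union>i \<in> C. ball (fst i) (snd i))"
  have "N \<in> sets lborel" unfolding N_def using assms
    by (simp del: UN_simps) (intro sets.Diff borel_open open_UN ballI open_ball, auto)
  then have "N \<in> null_sets lborel"
    using C(4) by (simp add: null_sets_completion_iff negligible_iff_null_sets N_def)
  moreover have "disjoint_family_on (\<lambda>i. ball (fst i) (snd i)) C"
    using C(3) by (auto simp: disjoint_family_on_def pairwise_def disjnt_def)
  moreover have "S = (\<Union>i\<in>C. ball (fst i) (snd i)) \<union> N"
    using C(2) by (auto simp: N_def K_def)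
  ultimately show ?thesis using that C(1,2) by (auto simp: K_def)
qed

lemma emeasure_disjoint_balls_Un_null:
  fixes c :: "'i \<Rightarrow> 'b::euclidean_space"
  assumes "countable C" "\<And>i. i \<in> C \<Longrightarrow> 0 \<le> e i"
    and "disjoint_family_on (\<lambda>i. ball (c i) (e i)) C" "N \<in> null_sets lborel"
  shows "emeasure lborel ((\<Union>i\<in>C. ball (c i) (e i)) \<union> N) =
    (\<integral>\<^sup>+i. ennreal (unit_ball_vol (real DIM('b)) * e i ^ DIM('b)) \<partial>count_space C)"
proof -
  have "emeasure lborel ((\<Union>i\<in>C. ball (c i) (e i)) \<union> N) = emeasure lborel (\<Union>i\<in>C. ball (c i) (e i))"
    using assms(4) by (intro emeasure_Un_null_set) (auto intro!: borel_open open_UN)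
  also have "\<dots> = (\<integral>\<^sup>+i. emeasure lborel (ball (c i) (e i)) \<partial>count_space C)"
    using assms(1,3) by (intro emeasure_UN_countable) auto
  also have "\<dots> = (\<integral>\<^sup>+i. ennreal (unit_ball_vol (real DIM('b)) * e i ^ DIM('b)) \<partial>count_space C)"
    using assms(2) by (intro nn_integral_cong) (simp add: emeasure_ball)
  finally show ?thesis .
qed

lemma orthogonal_transformation_image_null_sets:
  fixes G :: "'b::euclidean_space \<Rightarrow> 'b"
  assumes G: "orthogonal_transformation G" and "N \<in> null_sets lborel"
  shows "G ` N \<in> null_sets lborel"
proof -
  have "G ` N = inv G -` N"
    using orthogonal_transformation_bij[OF G] by (simp add: bij_vimage_eq_inv_image bij_imp_bij_inv inv_inv_eq)
  moreover have "inv G \<in> borel_measurable borel"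
    using orthogonal_transformation_inv[OF G]
    by (intro borel_measurable_continuous_onI) (simp add: linear_continuous_on linear_linear orthogonal_transformation_linear)
  ultimately have "G ` N \<in> sets lborel" using null_setsD2[OF assms(2)] by (simp add: measurable_sets_borel)
  moreover have "negligible N"
    using assms(2) null_sets_completion_iff[OF null_setsD2[OF assms(2)]]
    by (simp add: negligible_iff_null_sets)
  then have "negligible (G ` N)"
    using G by (intro negligible_differentiable_image_negligible)
      (auto simp: linear_imp_differentiable differentiable_on_def orthogonal_transformation_linear)
  ultimately show ?thesis by (simp add: null_sets_completion_iff negligible_iff_null_sets)
qed

lemma emeasure_orthogonal_transformation_image_open:
  fixes G :: "'b::euclidean_space \<Rightarrow> 'b"
  assumes G: "orthogonal_transformation G" and "open S"
  shows "emeasure lborel (G ` S) = emeasure lborel S"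
proof -
  obtain C :: "('b \<times> real) set" and N where C: "countable C" "\<And>i. i \<in> C \<Longrightarrow> 0 < snd i"
    "disjoint_family_on (\<lambda>i. ball (fst i) (snd i)) C" "N \<in> null_sets lborel"
    and S: "S = (\<Union>i\<in>C. ball (fst i) (snd i)) \<union> N"
    using open_eq_disjoint_balls_Un_null[OF \<open>open S\<close>] by blast
  have ball: "G ` ball (fst i) (snd i) = ball (G (fst i)) (snd i)" for i
    by (rule image_orthogonal_transformation_ball[OF G])
  have "G ` S = (\<Union>i\<in>C. ball (G (fst i)) (snd i)) \<union> G ` N"
    unfolding S by (simp add: image_Un image_UN ball)
  moreover have "disjoint_family_on (\<lambda>i. ball (G (fst i)) (snd i)) C"
    using C(3) orthogonal_transformation_inj[OF G]
    by (simp add: disjoint_family_on_def flip: ball image_Int)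
  ultimately show ?thesis
    using C orthogonal_transformation_image_null_sets[OF G C(4)]
    by (simp add: S emeasure_disjoint_balls_Un_null less_imp_le)
qed

lemma distr_lborel_orthogonal_transformation:
  fixes H :: "'b::euclidean_space \<Rightarrow> 'b"
  assumes H: "orthogonal_transformation H"
  shows "distr lborel borel H = lborel"
proof (rule lborel_eqI[symmetric])
  have Hm: "H \<in> borel_measurable borel"
    using H by (intro borel_measurable_continuous_onI) (simp add: linear_continuous_on linear_linear orthogonal_transformation_linear)
  fix l u :: 'b assume lu: "\<And>b. b \<in> Basis \<Longrightarrow> l \<bullet> b \<le> u \<bullet> b"
  have "emeasure (distr lborel borel H) (box l u) = emeasure lborel (H -` box l u)"
    using Hm by (simp add: emeasure_distr)
  also have "H -` box l u = inv H ` box l u"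
    using orthogonal_transformation_bij[OF H] by (simp add: bij_vimage_eq_inv_image)
  also have "emeasure lborel (inv H ` box l u) = emeasure lborel (box l u)"
    by (rule emeasure_orthogonal_transformation_image_open) (use orthogonal_transformation_inv[OF H] in auto)
  also have "\<dots> = (\<Prod>b\<in>Basis. (u - l) \<bullet> b)" using lu by simp
  finally show "emeasure (distr lborel borel H) (box l u) = (\<Prod>b\<in>Basis. (u - l) \<bullet> b)" .
qed simp

lemma euclidean_orthogonal_transformation_exists:
  fixes a b :: "'b::euclidean_space" assumes ab: "norm a = norm b"
  obtains H where "orthogonal_transformation H" "H a = b"
proof (cases "a = b")
  case True then show ?thesis using that[of "\<lambda>x. x"] by simp
next
  case False
  \<comment> \<open>the reflection in the hyperplane orthogonal to \<open>a - b\<close>\<close>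
  define v where "v = a - b"
  have vv: "v \<bullet> v > 0" using False by (simp add: v_def)
  define H where "H y = y - (2 * (y \<bullet> v) / (v \<bullet> v)) *\<^sub>R v" for y
  have lin: "linear H"
    by (rule linearI) (simp_all add: H_def inner_add_left algebra_simps add_divide_distrib scaleR_add_left)
  have nrm: "norm (H y) = norm y" for y
  proof -
    have "(norm (H y))\<^sup>2 = (norm y)\<^sup>2"
      using vv unfolding power2_norm_eq_inner H_def
      by (simp add: inner_diff_left inner_diff_right algebra_simps power2_eq_square) (simp add: field_simps inner_commute)
    then show ?thesis by (simp add: power2_eq_iff_nonneg)
  qed
  have "H a = b"
  proof -
    have aa: "a \<bullet> a = b \<bullet> b" using ab by (simp add: norm_eq_sqrt_inner)
    have "2 * (a \<bullet> v) = v \<bullet> v" unfolding v_def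
      using aa by (simp add: inner_diff_left inner_diff_right inner_commute)
    then show ?thesis using vv by (simp add: H_def v_def)
  qed
  then show ?thesis using that[of H] lin nrm by (simp add: orthogonal_transformation)
qed

lemma nn_integral_lborel_scaleR:
  fixes h :: "'b::euclidean_space \<Rightarrow> ennreal"
  assumes "c \<noteq> 0" and [measurable]: "h \<in> borel_measurable borel"
  shows "(\<integral>\<^sup>+z. h z \<partial>lborel) = ennreal (\<bar>c\<bar> ^ DIM('b)) * (\<integral>\<^sup>+w. h (c *\<^sub>R w) \<partial>lborel)"
  by (subst lborel_affine[OF assms(1), of 0]) (simp add: nn_integral_density nn_integral_distr nn_integral_cmult)

lemma borel_measurable_fst_div_norm [measurable]:
  "(\<lambda>y::real \<times> 'c::euclidean_space. fst y / norm y) \<in> borel_measurable borel"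
  by (intro borel_measurable_divide borel_measurable_norm borel_measurable_continuous_onI
      continuous_on_fst continuous_on_id)

lemma norm_Pair_scaleR: "norm (t, t *\<^sub>R w) = \<bar>t\<bar> * sqrt (1 + (norm w)\<^sup>2)"
  unfolding norm_Pair by (simp add: power_mult_distrib distrib_left flip: real_sqrt_abs real_sqrt_mult)

lemma nn_integral_power_Ioo:
  fixes c b :: real
  assumes "0 \<le> c" "0 \<le> b"
  shows "(\<integral>\<^sup>+t. ennreal (c * t ^ m) * indicator {0<..<b} t \<partial>lborel) = ennreal (c * b ^ (m + 1) / real (m + 1))"
proof -
  have "(\<integral>\<^sup>+t. ennreal (c * t ^ m) * indicator {0<..<b} t \<partial>lborel) =
      (\<integral>\<^sup>+t. ennreal (c * t ^ m) * indicator {0..b} t \<partial>lborel)"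
  proof (intro nn_integral_cong_AE)
    show "AE t in lborel. ennreal (c * t ^ m) * indicator {0<..<b} t = ennreal (c * t ^ m) * indicator {0..b} t"
      using AE_lborel_singleton[of 0] AE_lborel_singleton[of b] by eventually_elim (auto simp: indicator_def)
  qed
  also have "\<dots> = ennreal (c * b ^ (m + 1) / real (m + 1) - c * 0 ^ (m + 1) / real (m + 1))"
  proof (rule nn_integral_FTC_Icc)
    fix t assume t: "t \<in> {0..b}"
    have "((\<lambda>t. c * t ^ (m + 1) / real (m + 1)) has_real_derivative c * (real (m + 1) * t ^ m) / real (m + 1)) (at t)"
      by (intro DERIV_cdivide DERIV_cmult) (use DERIV_pow[of "m + 1" t] in simp)
    then show "((\<lambda>t. c * t ^ (m + 1) / real (m + 1)) has_real_derivative c * t ^ m) (at t)"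
      by (simp del: of_nat_add)
    show "0 \<le> c * t ^ m" using assms t by simp
  qed (use assms in simp_all)
  finally show ?thesis by simp
qed

lemma borel_measurable_ball_zonal:
  assumes "\<phi> \<in> borel_measurable borel"
  shows "(\<lambda>y::real \<times> 'a::euclidean_space. ennreal (indicator (ball 0 \<rho>) y * \<phi> (fst y / norm y))) \<in> borel_measurable borel"
  by (intro measurable_compose[OF _ measurable_ennreal] borel_measurable_times borel_measurable_indicator
      measurable_compose[OF borel_measurable_fst_div_norm assms]) auto

lemma nn_integral_ball_zonal_fibre:
  fixes \<phi> :: "real \<Rightarrow> real"
  assumes "t \<noteq> 0" and [measurable]: "\<phi> \<in> borel_measurable borel"
    and nn: "\<And>c. 0 \<le> \<phi> c" and neg: "\<And>c. c \<le> 0 \<Longrightarrow> \<phi> c = 0"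
  defines "m \<equiv> DIM('a::euclidean_space)"
  shows "(\<integral>\<^sup>+z. ennreal (indicator (ball 0 \<rho>) (t, z::'a) * \<phi> (t / norm (t, z))) \<partial>lborel) =
    (\<integral>\<^sup>+w. ennreal (\<phi> (1 / sqrt (1 + (norm (w::'a))\<^sup>2)) * t ^ m) *
      indicator {0<..<\<rho> / sqrt (1 + (norm w)\<^sup>2)} t \<partial>lborel)"
proof -
  note F = borel_measurable_ball_zonal[OF assms(2), of \<rho>, where 'a='a]
  have P: "(\<lambda>z::'a. (t, z)) \<in> borel_measurable borel"
    by (intro borel_measurable_continuous_onI continuous_intros)
  define h where "h z = ennreal (indicator (ball 0 \<rho>) (t, z) * \<phi> (t / norm (t, z)))" for z :: 'a
  have [measurable]: "h \<in> borel_measurable borel"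
    using measurable_compose[OF P F] by (simp add: h_def[abs_def])
  \<comment> \<open>writing \<open>z = t w\<close> makes \<open>fst y / norm y = 1 / sqrt (1 + (norm w)\<^sup>2)\<close> independent of \<open>t\<close>\<close>
  have "(\<integral>\<^sup>+z. ennreal (indicator (ball 0 \<rho>) (t, z::'a) * \<phi> (t / norm (t, z))) \<partial>lborel) =
      ennreal (\<bar>t\<bar> ^ m) * (\<integral>\<^sup>+w. h (t *\<^sub>R w) \<partial>lborel)"
    using nn_integral_lborel_scaleR[OF \<open>t \<noteq> 0\<close>, of h] by (simp add: h_def m_def)
  also have "\<dots> = (\<integral>\<^sup>+w. ennreal (\<bar>t\<bar> ^ m) * h (t *\<^sub>R w) \<partial>lborel)"
    by (rule nn_integral_cmult[symmetric]) measurable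
  also have "\<dots> = (\<integral>\<^sup>+w. ennreal (\<phi> (1 / sqrt (1 + (norm (w::'a))\<^sup>2)) * t ^ m) *
      indicator {0<..<\<rho> / sqrt (1 + (norm w)\<^sup>2)} t \<partial>lborel)"
  proof (intro nn_integral_cong)
    fix w :: 'a
    define s where "s = sqrt (1 + (norm w)\<^sup>2)"
    have s: "1 \<le> s" by (simp add: s_def)
    show "ennreal (\<bar>t\<bar> ^ m) * h (t *\<^sub>R w) = ennreal (\<phi> (1 / s) * t ^ m) * indicator {0<..<\<rho> / s} t"
    proof (cases "0 < t")
      case True
      then have "(t, t *\<^sub>R w) \<in> ball 0 \<rho> \<longleftrightarrow> t < \<rho> / s"
        using s by (simp add: norm_Pair_scaleR s_def[symmetric] pos_less_divide_eq mult.commute)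
      then show ?thesis using True s nn
        by (simp add: h_def norm_Pair_scaleR s_def[symmetric] indicator_def ennreal_mult'[symmetric] power_abs)
    next
      case False
      then have "t < 0" using \<open>t \<noteq> 0\<close> by simp
      then show ?thesis using s by (simp add: h_def norm_Pair_scaleR divide_nonpos_nonneg neg)
    qed
  qed
  finally show ?thesis .
qed

lemma nn_integral_ball_zonal:
  fixes \<phi> :: "real \<Rightarrow> real"
  assumes \<rho>: "\<rho> > 0" and [measurable]: "\<phi> \<in> borel_measurable borel"
    and nn: "\<And>c. \<phi> c \<ge> 0" and neg: "\<And>c. c \<le> 0 \<Longrightarrow> \<phi> c = 0"
  defines "m \<equiv> DIM('a::euclidean_space)"
  shows "(\<integral>\<^sup>+y. ennreal (indicator (ball 0 \<rho>) y * \<phi> (fst y / norm y)) \<partial>(lborel::(real\<times>'a) measure)) =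
    (\<integral>\<^sup>+w. ennreal (\<phi> (1 / sqrt (1 + (norm (w::'a))\<^sup>2)) * \<rho> ^ (m + 1) / (real (m + 1) * sqrt (1 + (norm w)\<^sup>2) ^ (m + 1))) \<partial>lborel)"
proof -
  define s where "s w = sqrt (1 + (norm w)\<^sup>2)" for w :: 'a
  have s: "1 \<le> s w" for w unfolding s_def by simp
  define G where "G = (\<lambda>(t, w). ennreal (\<phi> (1 / s w) * t ^ m) * indicator {0<..<\<rho> / s w} t)"
  have [measurable]: "G \<in> borel_measurable (lborel \<Otimes>\<^sub>M lborel)"
    unfolding G_def s_def indicator_def greaterThanLessThan_iff by measurable
  note [measurable] = borel_measurable_ball_zonal[OF assms(2), of \<rho>, where 'a='a]
  have "(\<integral>\<^sup>+y. ennreal (indicator (ball 0 \<rho>) y * \<phi> (fst y / norm y)) \<partial>(lborel::(real\<times>'a) measure)) =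
      (\<integral>\<^sup>+t. \<integral>\<^sup>+z. ennreal (indicator (ball 0 \<rho>) (t, z::'a) * \<phi> (t / norm (t, z))) \<partial>lborel \<partial>lborel)"
    by (subst lborel_prod[symmetric], subst lborel.nn_integral_fst[symmetric]) (simp_all add: lborel_prod)
  also have "\<dots> = (\<integral>\<^sup>+t. \<integral>\<^sup>+w. G (t, w) \<partial>lborel \<partial>lborel)"
    using AE_lborel_singleton[of 0]
    by (intro nn_integral_cong_AE) (auto elim!: eventually_mono
        simp: G_def s_def m_def nn_integral_ball_zonal_fibre[OF _ assms(2) nn neg])
  also have "\<dots> = (\<integral>\<^sup>+w. \<integral>\<^sup>+t. G (t, w) \<partial>lborel \<partial>lborel)"
    by (rule lborel_pair.Fubini'[symmetric]) simp
  also have "\<dots> = (\<integral>\<^sup>+w. ennreal (\<phi> (1 / s w) * \<rho> ^ (m + 1) / (real (m + 1) * s w ^ (m + 1))) \<partial>lborel)"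
  proof (intro nn_integral_cong)
    fix w
    have "0 \<le> \<rho> / s w" using \<rho> s[of w] by simp
    then have "(\<integral>\<^sup>+t. G (t, w) \<partial>lborel) = ennreal (\<phi> (1 / s w) * (\<rho> / s w) ^ (m + 1) / real (m + 1))"
      unfolding G_def by (simp add: nn_integral_power_Ioo[OF nn])
    then show "(\<integral>\<^sup>+t. G (t, w) \<partial>lborel) = ennreal (\<phi> (1 / s w) * \<rho> ^ (m + 1) / (real (m + 1) * s w ^ (m + 1)))"
      by (simp add: power_divide mult.commute)
  qed
  finally show ?thesis unfolding s_def .
qed

lemma sphere_integral_orthogonal_transformation:
  fixes H :: "'b::euclidean_space \<Rightarrow> 'b"
  assumes H: "orthogonal_transformation H" and [measurable]: "f \<in> borel_measurable borel"
  shows "sphere_integral \<rho> (\<lambda>y. f (H y)) = sphere_integral \<rho> f"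
proof -
  have Hm[measurable]: "H \<in> borel_measurable borel"
    using H by (intro borel_measurable_continuous_onI)
      (simp add: linear_continuous_on linear_linear orthogonal_transformation_linear)
  define g where "g y = indicator (ball 0 \<rho>) y * f ((\<rho> / norm y) *\<^sub>R y)" for y :: 'b
  have proj: "(\<lambda>y::'b. (\<rho> / norm y) *\<^sub>R y) \<in> borel_measurable borel" by measurable
  have [measurable]: "g \<in> borel_measurable borel" unfolding g_def
    by (intro borel_measurable_times borel_measurable_indicator measurable_compose[OF proj]) auto
  have "g (H y) = indicator (ball 0 \<rho>) y * f (H ((\<rho> / norm y) *\<^sub>R y))" for y
    using H by (simp add: g_def orthogonal_transformation_norm indicator_def
        linear_cmul[OF orthogonal_transformation_linear[OF H]])
  then have "(LINT y : ball 0 \<rho> | lborel. f (H ((\<rho> / norm y) *\<^sub>R y))) = integral\<^sup>L lborel (\<lambda>y. g (H y))"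
    by (simp add: set_lebesgue_integral_def)
  also have "\<dots> = integral\<^sup>L (distr lborel borel H) g"
    by (rule integral_distr[symmetric]) simp_all
  also have "\<dots> = (LINT y : ball 0 \<rho> | lborel. f ((\<rho> / norm y) *\<^sub>R y))"
    by (simp add: distr_lborel_orthogonal_transformation[OF H] g_def[abs_def] set_lebesgue_integral_def)
  finally show ?thesis by (simp add: sphere_integral_def)
qed

lemma sphere_integral_cong:
  fixes f g :: "'b::euclidean_space \<Rightarrow> real"
  assumes [measurable]: "f \<in> borel_measurable borel" "g \<in> borel_measurable borel"
    and "\<rho> > 0" and fg: "\<And>y. norm y = \<rho> \<Longrightarrow> f y = g y"
  shows "sphere_integral \<rho> f = sphere_integral \<rho> g"
proof -
  have "(LINT y : ball 0 \<rho> | lborel. f ((\<rho> / norm y) *\<^sub>R y)) = (LINT y : ball 0 \<rho> | lborel. g ((\<rho> / norm y) *\<^sub>R y))"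
  proof (rule set_lebesgue_integral_cong_AE)
    show "AE y \<in> ball 0 \<rho> in lborel. f ((\<rho> / norm y) *\<^sub>R y) = g ((\<rho> / norm y) *\<^sub>R y)"
      using AE_lborel_singleton[of 0] by eventually_elim (use \<open>\<rho> > 0\<close> in \<open>auto intro: fg\<close>)
  qed simp_all
  then show ?thesis by (simp add: sphere_integral_def)
qed

lemma enn2real_nn_integral_cmult:
  fixes f :: "'b \<Rightarrow> real"
  assumes "0 \<le> k" and [measurable]: "f \<in> borel_measurable M" "S \<in> sets M"
  shows "k * enn2real (\<integral>\<^sup>+x. ennreal (f x) * indicator S x \<partial>M) =
    enn2real (\<integral>\<^sup>+x. ennreal (k * f x) * indicator S x \<partial>M)"
proof -
  have "(\<integral>\<^sup>+x. ennreal (k * f x) * indicator S x \<partial>M) = (\<integral>\<^sup>+x. ennreal k * (ennreal (f x) * indicator S x) \<partial>M)"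
    using assms(1) by (simp add: ennreal_mult' mult.assoc)
  also have "\<dots> = ennreal k * (\<integral>\<^sup>+x. ennreal (f x) * indicator S x \<partial>M)"
    by (rule nn_integral_cmult) measurable
  finally show ?thesis using assms(1) by (simp add: enn2real_mult)
qed

lemma sphere_integral_zonal:
  fixes \<phi> :: "real \<Rightarrow> real"
  assumes \<rho>: "\<rho> > 0" and [measurable]: "\<phi> \<in> borel_measurable borel"
    and nn: "\<And>c. \<phi> c \<ge> 0" and neg: "\<And>c. c \<le> 0 \<Longrightarrow> \<phi> c = 0"
  defines "m \<equiv> DIM('a::euclidean_space)"
  shows "sphere_integral \<rho> (\<lambda>y::real \<times> 'a. \<phi> (fst y / norm y)) =
    enn2real (\<integral>\<^sup>+a. ennreal (\<phi> (1 / sqrt (1 + a\<^sup>2)) * \<rho> ^ m / sqrt (1 + a\<^sup>2) ^ (m + 1) *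
      sphere_area m a) * indicator {0..} a \<partial>lborel)"
proof -
  define s where "s a = sqrt (1 + a\<^sup>2)" for a :: real
  define P where "P a = \<phi> (1 / s a) * \<rho> ^ (m + 1) / (real (m + 1) * s a ^ (m + 1))" for a
  have s_pos: "s a > 0" for a by (simp add: s_def add_pos_nonneg)
  have P_nonneg: "P a \<ge> 0" for a using nn \<rho> s_pos[of a] by (simp add: P_def)
  have [measurable]: "s \<in> borel_measurable borel" "P \<in> borel_measurable borel"
    unfolding P_def s_def by measurable
  have fst_norm_scaleR: "fst ((\<rho> / norm y) *\<^sub>R y) / norm ((\<rho> / norm y) *\<^sub>R y) = fst y / norm y"
    for y :: "real \<times> 'a"
    using \<rho> by (cases "y = 0") auto
  have "sphere_integral \<rho> (\<lambda>y::real \<times> 'a. \<phi> (fst y / norm y)) =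
      real (m + 1) / \<rho> * (LINT y : ball 0 \<rho> | lborel. \<phi> (fst (y::real \<times> 'a) / norm y))"
    unfolding sphere_integral_def fst_norm_scaleR by (simp add: m_def)
  also have "(LINT y : ball 0 \<rho> | lborel. \<phi> (fst (y::real \<times> 'a) / norm y)) =
      enn2real (\<integral>\<^sup>+y. ennreal (indicator (ball 0 \<rho>) y * \<phi> (fst (y::real \<times> 'a) / norm y)) \<partial>lborel)"
    unfolding set_lebesgue_integral_def
    by (simp, rule integral_eq_nn_integral) (auto simp: nn intro!: borel_measurable_times
        borel_measurable_indicator measurable_compose[OF borel_measurable_fst_div_norm])
  also have "(\<integral>\<^sup>+y. ennreal (indicator (ball 0 \<rho>) y * \<phi> (fst (y::real \<times> 'a) / norm y)) \<partial>lborel) =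
      (\<integral>\<^sup>+w. ennreal (P (norm (w::'a))) \<partial>lborel)"
    unfolding P_def s_def m_def by (rule nn_integral_ball_zonal[OF \<rho> _ nn neg]) simp
  also have "\<dots> = (\<integral>\<^sup>+a. ennreal (P a) * ennreal (sphere_area m a) * indicator {0..} a \<partial>lborel)"
    unfolding m_def by (rule nn_integral_radial) simp
  also have "\<dots> = (\<integral>\<^sup>+a. ennreal (P a * sphere_area m a) * indicator {0..} a \<partial>lborel)"
    using P_nonneg by (intro nn_integral_cong) (simp add: sphere_area_def ennreal_mult indicator_def)
  also have "real (m + 1) / \<rho> * enn2real \<dots> =
      enn2real (\<integral>\<^sup>+a. ennreal (real (m + 1) / \<rho> * (P a * sphere_area m a)) * indicator {0..} a \<partial>lborel)"
    using \<rho> by (intro enn2real_nn_integral_cmult) simp_all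
  also have "(\<lambda>a. real (m + 1) / \<rho> * (P a * sphere_area m a)) = (\<lambda>a. \<phi> (1 / s a) * \<rho> ^ m / s a ^ (m + 1) * sphere_area m a)"
    using \<rho> s_pos unfolding P_def by (intro ext) (simp add: field_simps del: of_nat_Suc of_nat_add)
  finally show ?thesis unfolding s_def .
qed

text \<open>\<open>J\<close> is only continuous on \<open>[0, \<infinity>)\<close>; its extension by \<open>J 0\<close> is Borel measurable on \<open>\<real>\<close>.\<close>

definition Jext :: "(real \<Rightarrow> real) \<Rightarrow> real \<Rightarrow> real" where
  "Jext J t = J (max 0 t)"

lemma Jext_eq [simp]: "0 \<le> t \<Longrightarrow> Jext J t = J t"
  by (simp add: Jext_def)

lemma Jext_eq_0:
  assumes "\<forall>t\<ge>K. J t = 0" and "K \<le> t"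
  shows "Jext J t = 0"
  using assms by (simp add: Jext_def le_max_iff_disj)

lemma Jext_sqrt_eq_0:
  assumes "\<forall>t\<ge>K. J t = 0" and "K \<le> u"
  shows "Jext J (sqrt (c\<^sup>2 + u\<^sup>2)) = 0"
proof -
  have "u \<le> sqrt (c\<^sup>2 + u\<^sup>2)" by (rule real_le_rsqrt) simp
  then have "K \<le> sqrt (c\<^sup>2 + u\<^sup>2)" using assms(2) by linarith
  then show ?thesis by (rule Jext_eq_0[OF assms(1)])
qed

lemma borel_measurable_Jext [measurable]:
  assumes "continuous_on {0..} J"
  shows "Jext J \<in> borel_measurable borel"
proof -
  have "continuous_on UNIV (Jext J)" unfolding Jext_def
    by (rule continuous_on_compose2[OF assms]) (auto intro!: continuous_intros)
  then show ?thesis by (rule borel_measurable_continuous_onI)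
qed

lemma norm_axis_diff_sphere:
  fixes y :: "real \<times> 'a::euclidean_space"
  assumes "norm y = \<rho>"
  shows "norm ((r, 0) - y) = sqrt (r\<^sup>2 + \<rho>\<^sup>2 - 2 * r * \<rho> * (fst y / norm y))"
proof -
  obtain t z where y: "y = (t, z)" by (cases y)
  have "2 * r * \<rho> * (fst y / norm y) = 2 * r * t"
    using assms by (cases "y = 0") (auto simp: y norm_Pair zero_prod_def)
  moreover have "(norm ((r, 0) - y))\<^sup>2 = (r - t)\<^sup>2 + (norm z)\<^sup>2" "(norm y)\<^sup>2 = t\<^sup>2 + (norm z)\<^sup>2"
    by (simp_all add: y norm_Pair)
  moreover have "(norm y)\<^sup>2 = \<rho>\<^sup>2" using assms by simp
  ultimately have "r\<^sup>2 + \<rho>\<^sup>2 - 2 * r * \<rho> * (fst y / norm y) = (norm ((r, 0) - y))\<^sup>2"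
    using power2_diff[of r t] by linarith
  then show ?thesis by (metis norm_ge_zero real_sqrt_unique)
qed

lemma Jtilde_rotation_invariant:
  fixes x :: "real \<times> 'a::euclidean_space"
  assumes cJ: "continuous_on {0..} J" and x: "norm x = r"
  shows "Jtilde J x \<rho> = Jtilde J (r, 0::'a) \<rho>"
proof -
  have "norm (r, 0::'a) = norm x" using x by auto
  then obtain H :: "real \<times> 'a \<Rightarrow> real \<times> 'a" where H: "orthogonal_transformation H" "H (r, 0) = x"
    by (rule euclidean_orthogonal_transformation_exists)
  note [measurable] = borel_measurable_Jext[OF cJ]
  have "Jtilde J x \<rho> = sphere_integral \<rho> (\<lambda>y. Jext J (norm (x - y)))"
    by (simp add: Jtilde_def)
  also have "\<dots> = sphere_integral \<rho> (\<lambda>y. Jext J (norm (x - H y)))"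
    by (rule sphere_integral_orthogonal_transformation[symmetric, OF H(1)]) measurable
  also have "(\<lambda>y. Jext J (norm (x - H y))) = (\<lambda>y. Jext J (norm ((r, 0::'a) - y)))"
  proof
    fix y
    have "x - H y = H ((r, 0) - y)"
      using H by (simp add: linear_diff orthogonal_transformation_linear)
    then show "Jext J (norm (x - H y)) = Jext J (norm ((r, 0) - y))"
      using H(1) by (simp add: orthogonal_transformation_norm)
  qed
  finally show ?thesis by (simp add: Jtilde_def)
qed

lemma Jtilde_eq_zonal:
  fixes x :: "real \<times> 'a::euclidean_space"
  assumes cJ: "continuous_on {0..} J" and nn: "\<forall>t\<ge>0. 0 \<le> J t" and van: "\<forall>t\<ge>K. J t = 0"
    and "K \<le> r" and \<rho>: "0 < \<rho>" and x: "norm x = r"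
  defines "m \<equiv> DIM('a)"
  shows "Jtilde J x \<rho> = enn2real (\<integral>\<^sup>+a. ennreal (Jext J (sqrt (r\<^sup>2 + \<rho>\<^sup>2 - 2 * r * \<rho> / sqrt (1 + a\<^sup>2))) *
      \<rho> ^ m / sqrt (1 + a\<^sup>2) ^ (m + 1) * sphere_area m a) * indicator {0..} a \<partial>lborel)"
proof -
  have r: "0 \<le> r" using x by auto
  define \<phi> where "\<phi> c = Jext J (sqrt (r\<^sup>2 + \<rho>\<^sup>2 - 2 * r * \<rho> * c))" for c
  note [measurable] = borel_measurable_Jext[OF cJ]
  have \<phi>_nonpos: "\<phi> c = 0" if "c \<le> 0" for c
  proof -
    have "2 * r * \<rho> * c \<le> 0" using that r \<rho> by (intro mult_nonneg_nonpos) auto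
    then have "r\<^sup>2 \<le> r\<^sup>2 + \<rho>\<^sup>2 - 2 * r * \<rho> * c" using zero_le_power2[of \<rho>] by linarith
    then have "sqrt (r\<^sup>2) \<le> sqrt (r\<^sup>2 + \<rho>\<^sup>2 - 2 * r * \<rho> * c)" by (rule real_sqrt_le_mono)
    then have "K \<le> sqrt (r\<^sup>2 + \<rho>\<^sup>2 - 2 * r * \<rho> * c)" using r \<open>K \<le> r\<close> by simp
    then show ?thesis using van by (simp add: \<phi>_def Jext_eq_0)
  qed
  have \<phi>_borel: "\<phi> \<in> borel_measurable borel" unfolding \<phi>_def by measurable
  have \<phi>_nonneg: "0 \<le> \<phi> c" for c using nn by (simp add: \<phi>_def Jext_def)
  have "Jtilde J x \<rho> = sphere_integral \<rho> (\<lambda>y. Jext J (norm ((r, 0::'a) - y)))"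
    unfolding Jtilde_rotation_invariant[OF cJ x] by (simp add: Jtilde_def)
  also have "\<dots> = sphere_integral \<rho> (\<lambda>y::real \<times> 'a. \<phi> (fst y / norm y))"
    using measurable_compose[OF borel_measurable_fst_div_norm \<phi>_borel]
    by (intro sphere_integral_cong[OF _ _ \<rho>]) (measurable, simp_all add: \<phi>_def norm_axis_diff_sphere)
  also have "\<dots> = enn2real (\<integral>\<^sup>+a. ennreal (\<phi> (1 / sqrt (1 + a\<^sup>2)) * \<rho> ^ m / sqrt (1 + a\<^sup>2) ^ (m + 1) *
      sphere_area m a) * indicator {0..} a \<partial>lborel)"
    unfolding m_def by (rule sphere_integral_zonal[OF \<rho> \<phi>_borel \<phi>_nonneg \<phi>_nonpos])
  finally show ?thesis by (simp add: \<phi>_def)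
qed

lemma nn_integral_Jstar_radial:
  assumes cJ: "continuous_on {0..} J" and nn: "\<forall>t\<ge>0. 0 \<le> J t"
  defines "m \<equiv> DIM('a::euclidean_space)"
  shows "(\<integral>\<^sup>+x'. ennreal (J (norm (l, x'::'a))) \<partial>lborel) =
    (\<integral>\<^sup>+u. ennreal (Jext J (sqrt (l\<^sup>2 + u\<^sup>2)) * sphere_area m u) *
      indicator {0..} u \<partial>lborel)"
proof -
  note [measurable] = borel_measurable_Jext[OF cJ]
  have "(\<integral>\<^sup>+x'. ennreal (J (norm (l, x'::'a))) \<partial>lborel) =
      (\<integral>\<^sup>+x'. ennreal (Jext J (sqrt (l\<^sup>2 + (norm (x'::'a))\<^sup>2))) \<partial>lborel)"
    by (simp add: norm_Pair)
  also have "\<dots> = (\<integral>\<^sup>+u. ennreal (Jext J (sqrt (l\<^sup>2 + u\<^sup>2))) *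
      ennreal (sphere_area m u) * indicator {0..} u \<partial>lborel)"
    unfolding m_def by (rule nn_integral_radial) measurable
  also have "\<dots> = (\<integral>\<^sup>+u. ennreal (Jext J (sqrt (l\<^sup>2 + u\<^sup>2)) * sphere_area m u) *
      indicator {0..} u \<partial>lborel)"
    using nn by (intro nn_integral_cong) (auto simp: indicator_def ennreal_mult Jext_def sphere_area_def)
  finally show ?thesis .
qed

lemma Jstar_eq_nn_integral:
  assumes cJ: "continuous_on {0..} J" and nn: "\<forall>t\<ge>0. 0 \<le> J t"
  shows "Jstar TYPE('a::euclidean_space) J l = enn2real (\<integral>\<^sup>+x'. ennreal (J (norm (l, x'::'a))) \<partial>lborel)"
proof -
  note [measurable] = borel_measurable_Jext[OF cJ]
  have "(\<lambda>x'::'a. Jext J (norm (l, x'))) \<in> borel_measurable lborel" by measurable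
  then have "(\<lambda>x'::'a. J (norm (l, x'))) \<in> borel_measurable lborel" by simp
  then show ?thesis
    unfolding Jstar_def using nn by (intro integral_eq_nn_integral) auto
qed

lemma nn_integral_Jstar_le:
  assumes nn: "\<forall>t\<ge>0. 0 \<le> J t" and bound: "\<forall>t\<ge>0. J t \<le> M" and van: "\<forall>t\<ge>K. J t = 0" and "0 \<le> K"
  defines "m \<equiv> DIM('a::euclidean_space)"
  shows "(\<integral>\<^sup>+x'. ennreal (J (norm (l, x'::'a))) \<partial>lborel) \<le> ennreal (M * unit_ball_vol (real m) * K ^ m)"
proof -
  have M: "0 \<le> M" using nn bound by force
  have "(\<integral>\<^sup>+x'. ennreal (J (norm (l, x'::'a))) \<partial>lborel) \<le> (\<integral>\<^sup>+x'. ennreal M * indicator (cball 0 K) (x'::'a) \<partial>lborel)"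
  proof (intro nn_integral_mono)
    fix x' :: 'a
    have "K < norm x' \<Longrightarrow> K \<le> norm (l, x')" using norm_snd_le[of x' l] by simp
    then show "ennreal (J (norm (l, x'))) \<le> ennreal M * indicator (cball 0 K) x'"
      using bound[rule_format, of "norm (l, x')"] van by (cases "norm x' \<le> K") (auto simp: indicator_def ennreal_leI)
  qed
  also have "\<dots> = ennreal M * ennreal (unit_ball_vol (real m) * K ^ m)"
    using \<open>0 \<le> K\<close> by (simp add: nn_integral_cmult_indicator emeasure_cball m_def)
  also have "\<dots> = ennreal (M * unit_ball_vol (real m) * K ^ m)"
    using M \<open>0 \<le> K\<close> by (simp add: ennreal_mult mult.assoc)
  finally show ?thesis .
qed

lemma Jstar_eq_0:
  assumes van: "\<forall>t\<ge>K. J t = 0" and "K \<le> \<bar>l\<bar>"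
  shows "Jstar TYPE('a::euclidean_space) J l = 0"
proof -
  have "J (norm (l, x'::'a)) = 0" for x'
    using van norm_fst_le[of l x'] \<open>K \<le> \<bar>l\<bar>\<close> by simp
  then show ?thesis by (simp add: Jstar_def)
qed

lemma Jtilde_eq_0:
  fixes x :: "real \<times> 'a::euclidean_space"
  assumes van: "\<forall>t\<ge>K. J t = 0" and "0 < \<rho>" "K \<le> norm x" "K \<le> \<bar>norm x - \<rho>\<bar>"
  shows "Jtilde J x \<rho> = 0"
proof -
  have "J (norm (x - (\<rho> / norm y) *\<^sub>R y)) = 0" for y :: "real \<times> 'a"
  proof (cases "y = 0")
    case False
    then have "\<bar>norm x - \<rho>\<bar> \<le> norm (x - (\<rho> / norm y) *\<^sub>R y)"
      using norm_triangle_ineq3[of x "(\<rho> / norm y) *\<^sub>R y"] \<open>0 < \<rho>\<close> by simp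
    then show ?thesis using van assms(4) by simp
  qed (use van assms(3) in simp) \<comment> \<open>at the junk point \<open>y = 0\<close> the integrand is \<open>J (norm x)\<close>\<close>
  then show ?thesis by (simp add: Jtilde_def sphere_integral_def)
qed

lemma one_plus_power_le_secant:
  fixes x :: real
  assumes "0 \<le> x" "x \<le> 1"
  shows "(1 + x) ^ n \<le> 1 + (2 ^ n - 1) * x"
proof (induction n)
  case (Suc n)
  have "(1 + x) ^ Suc n \<le> (1 + x) * (1 + (2 ^ n - 1) * x)"
    using Suc assms by (simp add: mult_left_mono)
  also have "\<dots> = 1 + 2 ^ n * x + (2 ^ n - 1) * x * x" by (simp add: algebra_simps)
  also have "\<dots> \<le> 1 + 2 ^ n * x + (2 ^ n - 1) * x"
    using assms by (simp add: mult_left_le)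
  also have "\<dots> = 1 + (2 ^ Suc n - 1) * x" by (simp add: algebra_simps)
  finally show ?case .
qed simp

lemma abs_sub_one_le_of_abs_square_sub_one_le:
  fixes q \<delta> :: real
  assumes "0 < q" "\<bar>q\<^sup>2 - 1\<bar> \<le> \<delta>"
  shows "\<bar>q - 1\<bar> \<le> \<delta>"
proof (cases "q \<le> 1")
  case True
  then have "q\<^sup>2 \<le> q" using assms(1) by (simp add: power2_eq_square mult_le_cancel_right1)
  then show ?thesis using True assms(2) by linarith
next
  case False
  then have "q \<le> q\<^sup>2" by (simp add: power2_eq_square)
  then show ?thesis using False assms(2) by linarith
qed

lemma mult_power_div_square_sub_one_le:
  fixes p q \<delta> :: real
  assumes d: "0 \<le> \<delta>" "\<delta> \<le> 1/2" and p: "\<bar>p - 1\<bar> \<le> \<delta>" and q: "0 < q" "\<bar>q\<^sup>2 - 1\<bar> \<le> \<delta>"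
  shows "p * q ^ m / q\<^sup>2 - 1 \<le> 2 ^ (m + 3) * \<delta>"
proof -
  have "1 / q\<^sup>2 \<le> 1 / (1 - \<delta>)" using q d by (intro divide_left_mono) auto
  also have "\<dots> \<le> 1 + 2 * \<delta>"
    using d mult_nonneg_nonneg[of \<delta> "1 - 2 * \<delta>"] by (simp add: divide_le_eq algebra_simps)
  finally have "1 / q\<^sup>2 \<le> 1 + 2 * \<delta>" .
  moreover have "q ^ m \<le> (1 + 2 * \<delta>) ^ m"
    using abs_sub_one_le_of_abs_square_sub_one_le[OF q] q d by (intro power_mono) auto
  ultimately have "p * q ^ m * (1 / q\<^sup>2) \<le> (1 + 2 * \<delta>) * (1 + 2 * \<delta>) ^ m * (1 + 2 * \<delta>)"
    using p q d by (intro mult_mono) auto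
  also have "\<dots> = (1 + 2 * \<delta>) ^ (m + 2)" by (simp add: power_add power2_eq_square)
  also have "\<dots> \<le> 1 + (2 ^ (m + 2) - 1) * (2 * \<delta>)" using d by (intro one_plus_power_le_secant) auto
  also have "\<dots> \<le> 1 + 2 ^ (m + 3) * \<delta>" using d by (simp add: algebra_simps power_add)
  finally show ?thesis by simp
qed

lemma one_sub_mult_power_div_square_le:
  fixes p q \<delta> :: real
  assumes d: "0 \<le> \<delta>" "\<delta> \<le> 1/2" and p: "\<bar>p - 1\<bar> \<le> \<delta>" and q: "0 < q" "\<bar>q\<^sup>2 - 1\<bar> \<le> \<delta>"
  shows "1 - p * q ^ m / q\<^sup>2 \<le> 2 ^ (m + 3) * \<delta>"
proof -
  have "1 - \<delta> \<le> 1 / (1 + \<delta>)" using d by (simp add: le_divide_eq algebra_simps)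
  also have "\<dots> \<le> 1 / q\<^sup>2" using q d by (intro divide_left_mono) auto
  finally have "1 - \<delta> \<le> 1 / q\<^sup>2" .
  moreover have "(1 - \<delta>) ^ m \<le> q ^ m"
    using abs_sub_one_le_of_abs_square_sub_one_le[OF q] d by (intro power_mono) auto
  moreover have "0 \<le> p" using p d by linarith
  ultimately have lower: "(1 - \<delta>) * (1 - \<delta>) ^ m * (1 - \<delta>) \<le> p * q ^ m * (1 / q\<^sup>2)"
    using p d q(1) by (intro mult_mono) auto
  have "(1 - \<delta>) ^ (m + 2) = (1 - \<delta>) * (1 - \<delta>) ^ m * (1 - \<delta>)"
    by (simp add: power_add power2_eq_square)
  also note lower
  also have "p * q ^ m * (1 / q\<^sup>2) = p * q ^ m / q\<^sup>2" by (metis mult_1_right times_divide_eq_right)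
  finally have "(1 - \<delta>) ^ (m + 2) \<le> p * q ^ m / q\<^sup>2" .
  moreover have "1 - real (m + 2) * \<delta> \<le> (1 - \<delta>) ^ (m + 2)"
    using Bernoulli_inequality[of "- \<delta>" "m + 2"] d by simp
  moreover have "real (m + 2) * \<delta> \<le> 2 ^ (m + 3) * \<delta>"
  proof (rule mult_right_mono)
    have "real (m + 2) \<le> 2 ^ (m + 2)" by (metis less_exp less_imp_le of_nat_le_iff of_nat_numeral of_nat_power)
    also have "(2::real) ^ (m + 2) \<le> 2 ^ (m + 3)" by (intro power_increasing) auto
    finally show "real (m + 2) \<le> 2 ^ (m + 3)" .
  qed (use d in simp)
  ultimately show ?thesis by linarith
qed

lemma abs_mult_power_div_square_sub_one_le:
  fixes p q \<delta> :: real
  assumes "0 \<le> \<delta>" "\<delta> \<le> 1/2" "\<bar>p - 1\<bar> \<le> \<delta>" "0 < q" "\<bar>q\<^sup>2 - 1\<bar> \<le> \<delta>"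
  shows "\<bar>p * q ^ m / q\<^sup>2 - 1\<bar> \<le> 2 ^ (m + 3) * \<delta>"
  using mult_power_div_square_sub_one_le[OF assms, where m=m] one_sub_mult_power_div_square_le[OF assms, where m=m]
  by (simp add: abs_le_iff)

text \<open>\<open>chord_subst r \<rho> a = sqrt (2 r \<rho> (1 - 1 / sqrt (1 + a\<^sup>2)))\<close>, written so as to be smooth at
  \<open>a = 0\<close>; see \<open>chord_subst_dist\<close> for why it is the right substitution.\<close>

definition chord_scale :: "real \<Rightarrow> real \<Rightarrow> real \<Rightarrow> real" where
  "chord_scale r \<rho> a = sqrt (2 * r * \<rho> / (sqrt (1 + a\<^sup>2) * (1 + sqrt (1 + a\<^sup>2))))"

definition chord_subst :: "real \<Rightarrow> real \<Rightarrow> real \<Rightarrow> real" where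
  "chord_subst r \<rho> a = a * chord_scale r \<rho> a"

definition chord_subst_deriv :: "real \<Rightarrow> real \<Rightarrow> real \<Rightarrow> real" where
  "chord_subst_deriv r \<rho> a = r * \<rho> / (sqrt (1 + a\<^sup>2) ^ 3 * chord_scale r \<rho> a)"

lemma chord_scale_pos: "0 < r \<Longrightarrow> 0 < \<rho> \<Longrightarrow> 0 < chord_scale r \<rho> a"
  unfolding chord_scale_def by (simp add: add_pos_pos add_pos_nonneg)

lemma chord_subst_nonneg: "0 < r \<Longrightarrow> 0 < \<rho> \<Longrightarrow> 0 \<le> a \<Longrightarrow> 0 \<le> chord_subst r \<rho> a"
  unfolding chord_subst_def using chord_scale_pos[of r \<rho> a] by simp

lemma chord_scale_sq:
  assumes "0 < r" "0 < \<rho>"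
  shows "(chord_scale r \<rho> a)\<^sup>2 = 2 * r * \<rho> / (sqrt (1 + a\<^sup>2) * (1 + sqrt (1 + a\<^sup>2)))"
  using assms unfolding chord_scale_def by (simp add: add_pos_pos add_pos_nonneg)

lemma chord_subst_sq:
  assumes "0 < r" "0 < \<rho>"
  shows "(chord_subst r \<rho> a)\<^sup>2 = 2 * r * \<rho> - 2 * r * \<rho> / sqrt (1 + a\<^sup>2)"
proof -
  define s where "s = sqrt (1 + a\<^sup>2)"
  have s: "0 < s" "s\<^sup>2 = 1 + a\<^sup>2" unfolding s_def by (auto simp: add_pos_nonneg)
  have "(chord_subst r \<rho> a)\<^sup>2 = (s\<^sup>2 - 1) * (2 * r * \<rho> / (s * (1 + s)))"
    using assms s by (simp add: chord_subst_def power_mult_distrib chord_scale_sq s_def)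
  also have "\<dots> = 2 * r * \<rho> - 2 * r * \<rho> / s"
  proof -
    have "0 < 1 + s" "0 < s + s * s" using s(1) by (auto simp: add_pos_pos)
    then show ?thesis using s(1) by (simp add: field_simps power2_eq_square)
  qed
  finally show ?thesis by (simp add: s_def)
qed

lemma chord_subst_dist:
  assumes "0 < r" "0 < \<rho>"
  shows "(r - \<rho>)\<^sup>2 + (chord_subst r \<rho> a)\<^sup>2 = r\<^sup>2 + \<rho>\<^sup>2 - 2 * r * \<rho> / sqrt (1 + a\<^sup>2)"
  using chord_subst_sq[OF assms] by (simp add: power2_diff)

lemma chord_subst_ge:
  assumes "0 < r" "0 < \<rho>" "2 * K\<^sup>2 \<le> r * \<rho>" "1 \<le> a"
  shows "K \<le> chord_subst r \<rho> a"
proof -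
  have "(4 / 3)\<^sup>2 \<le> 1 + a\<^sup>2"
    using one_le_power[OF assms(4), of 2] by (simp add: power2_eq_square)
  then have "4 / 3 \<le> sqrt (1 + a\<^sup>2)" by (rule real_le_rsqrt)
  then have "inverse (sqrt (1 + a\<^sup>2)) \<le> inverse (4 / 3)" by (rule le_imp_inverse_le) simp
  then have "r * \<rho> * inverse (sqrt (1 + a\<^sup>2)) \<le> r * \<rho> * (3 / 4)"
    using assms by (intro mult_left_mono) auto
  moreover have "(chord_subst r \<rho> a)\<^sup>2 = 2 * (r * \<rho>) - 2 * (r * \<rho> * inverse (sqrt (1 + a\<^sup>2)))"
    using chord_subst_sq[OF assms(1,2), of a] by (simp add: divide_inverse mult.assoc)
  ultimately have "K\<^sup>2 \<le> (chord_subst r \<rho> a)\<^sup>2"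
    using assms(3) by linarith
  moreover have "0 \<le> chord_subst r \<rho> a"
    using assms by (simp add: chord_subst_nonneg)
  ultimately show ?thesis by (rule power2_le_imp_le)
qed

lemma continuous_on_chord_subst_deriv: "0 < r \<Longrightarrow> 0 < \<rho> \<Longrightarrow> continuous_on A (chord_subst_deriv r \<rho>)"
  unfolding chord_subst_deriv_def[abs_def] chord_scale_def
  by (intro continuous_intros) (auto simp: add_pos_pos add_pos_nonneg add_nonneg_eq_0_iff)

lemma chord_subst_deriv_nonneg: "0 < r \<Longrightarrow> 0 < \<rho> \<Longrightarrow> 0 \<le> chord_subst_deriv r \<rho> a"
  unfolding chord_subst_deriv_def using chord_scale_pos[of r \<rho> a] by simp

lemma chord_scale_deriv_identity:
  fixes a s k r \<rho> :: real
  assumes s: "s > 0" and k: "k > 0" and kk: "k\<^sup>2 = 2 * r * \<rho> / (s * (1 + s))" and as: "a\<^sup>2 = s\<^sup>2 - 1"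
  shows "k + (inverse k / 2 * (- (2 * r * \<rho> * ((a / s) * (1 + s) + s * (a / s))) / (s * (1 + s))\<^sup>2)) * a = r * \<rho> / (s ^ 3 * k)"
proof -
  have s1: "1 + s > 0" using s by simp
  have e1: "(a / s) * (1 + s) + s * (a / s) = a * (1 + 2 * s) / s" using s by (simp add: field_simps)
  have a2: "a\<^sup>2 = (s - 1) * (s + 1)" using as by (simp add: algebra_simps power2_eq_square)
  define Y where "Y = - (2 * r * \<rho> * (a * (1 + 2 * s) / s)) / (s * (1 + s))\<^sup>2"
  have y1: "k * (k + (inverse k / 2 * Y) * a) = k\<^sup>2 + Y * a / 2"
    using k by (simp add: algebra_simps power2_eq_square)
  have y2: "Y * a / 2 = - (r * \<rho> * a\<^sup>2 * (1 + 2 * s) / (s ^ 3 * (1 + s)\<^sup>2))"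
    unfolding Y_def using s s1 by (simp add: divide_simps power2_eq_square power3_eq_cube)
  have "k * (k + (inverse k / 2 * (- (2 * r * \<rho> * (a * (1 + 2 * s) / s)) / (s * (1 + s))\<^sup>2)) * a)
      = k\<^sup>2 - r * \<rho> * a\<^sup>2 * (1 + 2 * s) / (s ^ 3 * (1 + s)\<^sup>2)"
    using y1 y2 unfolding Y_def by simp
  also have "\<dots> = 2 * r * \<rho> / (s * (1 + s)) - r * \<rho> * ((s - 1) * (s + 1)) * (1 + 2 * s) / (s ^ 3 * (1 + s)\<^sup>2)"
    by (simp only: kk a2)
  also have "\<dots> = r * \<rho> / s ^ 3"
    using s s1 by (simp add: divide_simps) algebra
  finally have "k * (k + (inverse k / 2 * (- (2 * r * \<rho> * (a * (1 + 2 * s) / s)) / (s * (1 + s))\<^sup>2)) * a) = r * \<rho> / s ^ 3" .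
  then have "k + (inverse k / 2 * (- (2 * r * \<rho> * (a * (1 + 2 * s) / s)) / (s * (1 + s))\<^sup>2)) * a = (r * \<rho> / s ^ 3) / k"
    using k by (metis divide_eq_eq less_irrefl mult.commute)
  then show ?thesis unfolding e1 by simp
qed

lemma has_real_derivative_chord_subst:
  assumes r: "r > 0" and \<rho>: "\<rho> > 0"
  shows "(chord_subst r \<rho> has_real_derivative chord_subst_deriv r \<rho> a) (at a)"
proof -
  define s where "s = sqrt (1 + a\<^sup>2)"
  have s: "s > 0" "s\<^sup>2 = 1 + a\<^sup>2" unfolding s_def by (auto simp: add_pos_nonneg)
  have ds: "((\<lambda>x. sqrt (1 + x\<^sup>2)) has_real_derivative a / s) (at a)"
  proof -
    have pa: "0 < 1 + a\<^sup>2" by (simp add: add_pos_nonneg)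
    show ?thesis using s pa by (auto intro!: derivative_eq_intros simp: s_def field_simps)
  qed
  have dg: "((\<lambda>x. sqrt (1 + x\<^sup>2) * (1 + sqrt (1 + x\<^sup>2))) has_real_derivative (a / s) * (1 + s) + s * (a / s)) (at a)"
    using DERIV_mult[OF ds DERIV_add[OF DERIV_const ds]] by (simp add: s_def mult.commute)
  have gne: "sqrt (1 + a\<^sup>2) * (1 + sqrt (1 + a\<^sup>2)) \<noteq> 0"
  proof -
    have h: "sqrt (1 + a\<^sup>2) > 0" using s(1) by (simp add: s_def)
    then have "sqrt (1 + a\<^sup>2) * (1 + sqrt (1 + a\<^sup>2)) > 0" by (simp add: add_pos_pos)
    then show ?thesis by (metis less_irrefl)
  qed
  have dQ: "((\<lambda>x. 2 * r * \<rho> / (sqrt (1 + x\<^sup>2) * (1 + sqrt (1 + x\<^sup>2)))) has_real_derivative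
      - (2 * r * \<rho> * ((a / s) * (1 + s) + s * (a / s))) / (s * (1 + s))\<^sup>2) (at a)"
    using DERIV_divide[OF DERIV_const dg gne] by (simp add: s_def power2_eq_square)
  define Q where "Q = 2 * r * \<rho> / (s * (1 + s))"
  have Q: "Q > 0" using s r \<rho> by (simp add: Q_def add_pos_nonneg)
  have dk: "(chord_scale r \<rho> has_real_derivative inverse (sqrt Q) / 2 * (- (2 * r * \<rho> * ((a / s) * (1 + s) + s * (a / s))) / (s * (1 + s))\<^sup>2)) (at a)"
    unfolding chord_scale_def[abs_def] using DERIV_chain2[OF DERIV_real_sqrt dQ] Q by (simp add: Q_def s_def)
  have "(chord_subst r \<rho> has_real_derivative 1 * chord_scale r \<rho> a + inverse (sqrt Q) / 2 * (- (2 * r * \<rho> * ((a / s) * (1 + s) + s * (a / s))) / (s * (1 + s))\<^sup>2) * a) (at a)"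
    unfolding chord_subst_def[abs_def] by (rule DERIV_mult[OF DERIV_ident dk])
  moreover have "1 * chord_scale r \<rho> a + inverse (sqrt Q) / 2 * (- (2 * r * \<rho> * ((a / s) * (1 + s) + s * (a / s))) / (s * (1 + s))\<^sup>2) * a = chord_subst_deriv r \<rho> a"
  proof -
    have k: "chord_scale r \<rho> a = sqrt Q" by (simp add: chord_scale_def Q_def s_def)
    have "sqrt Q + inverse (sqrt Q) / 2 * (- (2 * r * \<rho> * ((a / s) * (1 + s) + s * (a / s))) / (s * (1 + s))\<^sup>2) * a = r * \<rho> / (s ^ 3 * sqrt Q)"
      by (rule chord_scale_deriv_identity) (use s Q in \<open>auto simp: Q_def\<close>)
    then show ?thesis by (simp add: k chord_subst_deriv_def s_def)
  qed
  ultimately show ?thesis by simp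
qed

text \<open>Up to the area \<open>m |B\<^sub>1|\<close> of the unit sphere of \<open>\<real>\<^sup>m\<close>: the density of the surface measure of the
  sphere of radius \<open>\<rho>\<close> in \<open>\<real>\<^sup>m\<^sup>+\<^sup>1\<close> in the slope variable \<open>a\<close>, and the density of Lebesgue measure
  on \<open>\<real>\<^sup>m\<close> in the radial variable \<open>u = chord_subst r \<rho> a\<close>.\<close>

definition zonal_density :: "nat \<Rightarrow> real \<Rightarrow> real \<Rightarrow> real" where
  "zonal_density m \<rho> a = \<rho> ^ m / sqrt (1 + a\<^sup>2) ^ (m + 1) * a ^ (m - 1)"

definition chord_density :: "nat \<Rightarrow> real \<Rightarrow> real \<Rightarrow> real \<Rightarrow> real" where
  "chord_density m r \<rho> a = chord_subst r \<rho> a ^ (m - 1) * chord_subst_deriv r \<rho> a"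

lemma zonal_density_nonneg: "0 \<le> \<rho> \<Longrightarrow> 0 \<le> a \<Longrightarrow> 0 \<le> zonal_density m \<rho> a"
  unfolding zonal_density_def by simp

lemma chord_density_nonneg: "0 < r \<Longrightarrow> 0 < \<rho> \<Longrightarrow> 0 \<le> a \<Longrightarrow> 0 \<le> chord_density m r \<rho> a"
  unfolding chord_density_def by (simp add: chord_subst_nonneg chord_subst_deriv_nonneg)

lemma zonal_density_eq_chord_density:
  fixes a :: real
  assumes r: "0 < r" and \<rho>: "0 < \<rho>" and m: "1 \<le> m"
  defines "q \<equiv> \<rho> / (sqrt (1 + a\<^sup>2) * chord_scale r \<rho> a)"
  shows "zonal_density m \<rho> a = \<rho> / r * q ^ m / q\<^sup>2 * chord_density m r \<rho> a"
proof -
  obtain n where n: "m = Suc n" using m by (cases m) auto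
  define s where "s = sqrt (1 + a\<^sup>2)"
  have "0 < s" by (simp add: s_def add_pos_nonneg)
  moreover have "0 < chord_scale r \<rho> a" using r \<rho> by (rule chord_scale_pos)
  ultimately show ?thesis
    using r \<rho> unfolding q_def n zonal_density_def chord_density_def chord_subst_def chord_subst_deriv_def
      s_def[symmetric]
    by (simp add: field_simps power_mult_distrib power2_eq_square power3_eq_cube)
qed

lemma chord_scale_ratio_sq:
  fixes a :: real
  assumes "0 < r" "0 < \<rho>"
  defines "s \<equiv> sqrt (1 + a\<^sup>2)"
  shows "(\<rho> / (s * chord_scale r \<rho> a))\<^sup>2 = \<rho> / r * ((1 + s) / (2 * s))"
proof -
  have s: "0 < s" by (simp add: s_def add_pos_nonneg)
  have "(\<rho> / (s * chord_scale r \<rho> a))\<^sup>2 = \<rho>\<^sup>2 / (s\<^sup>2 * (chord_scale r \<rho> a)\<^sup>2)"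
    by (simp add: power_divide power_mult_distrib)
  also have "\<dots> = \<rho>\<^sup>2 / (s\<^sup>2 * (2 * r * \<rho> / (s * (1 + s))))"
    using assms(1,2) by (simp add: chord_scale_sq s_def)
  also have "\<dots> = \<rho> / r * ((1 + s) / (2 * s))"
    using s assms(1,2) by (simp add: field_simps power2_eq_square)
  finally show ?thesis .
qed

lemma annulus_radius_bounds:
  fixes r \<rho> K :: real
  assumes "2 * (K + K\<^sup>2) \<le> r" "\<bar>\<rho> - r\<bar> \<le> K" "0 < K"
  shows "K \<le> r / 2" "r / 2 \<le> \<rho>" "0 < \<rho>" "2 * K\<^sup>2 \<le> r * \<rho>" "\<bar>\<rho> / r - 1\<bar> \<le> K / r"
proof -
  have "2 * K + 2 * K\<^sup>2 \<le> r" using assms(1) by (simp add: distrib_left)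
  then show K: "K \<le> r / 2" using zero_le_power2[of K] by linarith
  then show \<rho>: "r / 2 \<le> \<rho>" "0 < \<rho>" using assms(2,3) by linarith+
  have "(2 * K) * (2 * K) \<le> r * (2 * \<rho>)" using K \<rho> assms(3) by (intro mult_mono) auto
  then show "2 * K\<^sup>2 \<le> r * \<rho>" by (simp add: power2_eq_square mult.commute)
  have r: "0 < r" using K assms(3) by linarith
  then have "\<rho> / r - 1 = (\<rho> - r) / r" by (simp add: field_simps)
  then show "\<bar>\<rho> / r - 1\<bar> \<le> K / r" using assms(2) r by (simp add: abs_divide divide_right_mono)
qed

lemma chord_ratio_sq_near_one:
  fixes r \<rho> K a :: real
  assumes r1: "1 \<le> r" and rK: "2 * (K + K\<^sup>2) \<le> r" and \<rho>r: "\<bar>\<rho> - r\<bar> \<le> K" and K: "0 < K"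
    and a: "0 \<le> a" and near: "chord_subst r \<rho> a \<le> K"
  shows "\<bar>(\<rho> / (sqrt (1 + a\<^sup>2) * chord_scale r \<rho> a))\<^sup>2 - 1\<bar> \<le> (K + K\<^sup>2) / r"
proof -
  define s where "s = sqrt (1 + a\<^sup>2)"
  define \<theta> where "\<theta> = (1 + s) / (2 * s)"
  have r: "0 < r" using r1 by simp
  note \<rho> = annulus_radius_bounds(2,3)[OF rK \<rho>r K]
  have s: "1 \<le> s" by (simp add: s_def)
  have \<theta>_le: "\<theta> \<le> 1" using s by (simp add: \<theta>_def divide_le_eq)
  have \<theta>_ge: "1 - K\<^sup>2 / (2 * r) \<le> \<theta>"
  proof -
    have "4 * r * \<rho> * (1 - \<theta>) = (chord_subst r \<rho> a)\<^sup>2"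
      using s unfolding chord_subst_sq[OF r \<rho>(2)] \<theta>_def s_def[symmetric] by (simp add: field_simps)
    also have "\<dots> \<le> K\<^sup>2" using near chord_subst_nonneg[OF r \<rho>(2) a] by (simp add: power_mono)
    finally have "1 - \<theta> \<le> K\<^sup>2 / (4 * r * \<rho>)" using r \<rho> by (simp add: field_simps)
    also have "\<dots> \<le> K\<^sup>2 / (2 * r)" using r \<rho> r1 by (intro divide_left_mono) auto
    finally show ?thesis by simp
  qed
  have \<rho>_div: "\<rho> / r \<le> 1 + K / r" "1 - K / r \<le> \<rho> / r"
    using annulus_radius_bounds(5)[OF rK \<rho>r K] by (simp_all add: abs_le_iff)
  have K_div: "0 \<le> K / r" "0 \<le> K\<^sup>2 / (2 * r)" "K / r + K\<^sup>2 / (2 * r) \<le> (K + K\<^sup>2) / r"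
    using K r by (simp_all add: field_simps)
  have q2: "(\<rho> / (s * chord_scale r \<rho> a))\<^sup>2 = \<rho> / r * \<theta>"
    unfolding \<theta>_def s_def by (rule chord_scale_ratio_sq[OF r \<rho>(2)])
  have "\<rho> / r * \<theta> \<le> \<rho> / r" by (rule mult_left_le) (use \<theta>_le \<rho> r in auto)
  moreover have "0 \<le> 1 - K\<^sup>2 / (2 * r)" using K_div rK r by (simp add: field_simps)
  then have "(1 - K / r) * (1 - K\<^sup>2 / (2 * r)) \<le> \<rho> / r * \<theta>"
    using \<rho>_div \<theta>_ge \<rho> r by (intro mult_mono) auto
  moreover have "1 - x - y \<le> (1 - x) * (1 - y)" if "0 \<le> x * y" for x y :: real
    using that by (simp add: algebra_simps)
  note this[OF mult_nonneg_nonneg[OF K_div(1,2)]]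
  ultimately show ?thesis
    unfolding s_def[symmetric] q2 abs_le_iff using \<rho>_div K_div by linarith
qed

lemma chord_density_close:
  fixes r \<rho> K a :: real
  assumes r1: "1 \<le> r" and rK: "2 * (K + K\<^sup>2) \<le> r" and \<rho>r: "\<bar>\<rho> - r\<bar> \<le> K" and K: "0 < K"
    and a: "0 \<le> a" and m: "1 \<le> m" and near: "chord_subst r \<rho> a \<le> K"
  shows "\<bar>zonal_density m \<rho> a - chord_density m r \<rho> a\<bar> \<le> 2 ^ (m + 3) * (K + K\<^sup>2) / r * chord_density m r \<rho> a"
proof -
  define \<delta> where "\<delta> = (K + K\<^sup>2) / r"
  define q where "q = \<rho> / (sqrt (1 + a\<^sup>2) * chord_scale r \<rho> a)"
  define R where "R = \<rho> / r * q ^ m / q\<^sup>2"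
  have r: "0 < r" using r1 by simp
  note \<rho> = annulus_radius_bounds(3)[OF rK \<rho>r K]
  have q: "0 < q" using \<rho> chord_scale_pos[OF r \<rho>, of a] by (simp add: q_def add_pos_nonneg)
  have \<delta>: "0 \<le> \<delta>" "\<delta> \<le> 1 / 2" using K r rK by (simp_all add: \<delta>_def field_simps)
  have "K / r \<le> \<delta>" unfolding \<delta>_def using r by (intro divide_right_mono) auto
  then have "\<bar>\<rho> / r - 1\<bar> \<le> \<delta>" using annulus_radius_bounds(5)[OF rK \<rho>r K] by linarith
  moreover have "\<bar>q\<^sup>2 - 1\<bar> \<le> \<delta>"
    unfolding q_def \<delta>_def by (rule chord_ratio_sq_near_one[OF r1 rK \<rho>r K a near])
  ultimately have "\<bar>R - 1\<bar> \<le> 2 ^ (m + 3) * \<delta>"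
    unfolding R_def by (rule abs_mult_power_div_square_sub_one_le[OF \<delta> _ q])
  moreover have "zonal_density m \<rho> a = R * chord_density m r \<rho> a"
    unfolding R_def q_def by (rule zonal_density_eq_chord_density[OF r \<rho> m])
  then have "\<bar>zonal_density m \<rho> a - chord_density m r \<rho> a\<bar> = \<bar>R - 1\<bar> * chord_density m r \<rho> a"
    using chord_density_nonneg[OF r \<rho> a, of m]
    by (simp add: abs_mult flip: left_diff_distrib[of R 1, simplified])
  ultimately show ?thesis
    using chord_density_nonneg[OF r \<rho> a, of m] mult_right_mono by (fastforce simp: \<delta>_def)
qed

lemma mult_density_close:
  fixes r \<rho> K a \<psi> :: real
  assumes r1: "1 \<le> r" and rK: "2 * (K + K\<^sup>2) \<le> r" and \<rho>r: "\<bar>\<rho> - r\<bar> \<le> K" and K: "0 < K"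
    and a: "0 \<le> a" and m: "1 \<le> m" and \<psi>: "0 \<le> \<psi>" and far: "K < chord_subst r \<rho> a \<Longrightarrow> \<psi> = 0"
  shows "\<bar>\<psi> * zonal_density m \<rho> a - \<psi> * chord_density m r \<rho> a\<bar>
    \<le> 2 ^ (m + 3) * (K + K\<^sup>2) / r * (\<psi> * chord_density m r \<rho> a)"
proof (cases "chord_subst r \<rho> a \<le> K")
  case True
  have "\<bar>\<psi> * zonal_density m \<rho> a - \<psi> * chord_density m r \<rho> a\<bar> =
      \<psi> * \<bar>zonal_density m \<rho> a - chord_density m r \<rho> a\<bar>"
    using \<psi> by (simp add: abs_mult flip: right_diff_distrib)
  also have "\<dots> \<le> \<psi> * (2 ^ (m + 3) * (K + K\<^sup>2) / r * chord_density m r \<rho> a)"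
    using chord_density_close[OF r1 rK \<rho>r K a m True] \<psi> by (rule mult_left_mono)
  finally show ?thesis by (simp add: mult_ac)
qed (use far in simp)

lemma enn2real_set_nn_integral_close:
  fixes f g :: "'b \<Rightarrow> real"
  assumes [measurable]: "f \<in> borel_measurable M" "g \<in> borel_measurable M" "S \<in> sets M"
    and f0: "\<And>x. x \<in> S \<Longrightarrow> 0 \<le> f x" and g0: "\<And>x. x \<in> S \<Longrightarrow> 0 \<le> g x"
    and fg: "\<And>x. x \<in> S \<Longrightarrow> \<bar>f x - g x\<bar> \<le> \<epsilon> * g x"
    and fin: "(\<integral>\<^sup>+x. ennreal (g x) * indicator S x \<partial>M) < \<infinity>"
  shows "\<bar>enn2real (\<integral>\<^sup>+x. ennreal (f x) * indicator S x \<partial>M) - enn2real (\<integral>\<^sup>+x. ennreal (g x) * indicator S x \<partial>M)\<bar>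
    \<le> \<epsilon> * enn2real (\<integral>\<^sup>+x. ennreal (g x) * indicator S x \<partial>M)"
proof -
  define f' where "f' x = f x * indicator S x" for x
  define g' where "g' x = g x * indicator S x" for x
  have [measurable]: "f' \<in> borel_measurable M" "g' \<in> borel_measurable M"
    unfolding f'_def g'_def by measurable
  have f'0: "0 \<le> f' x" and g'0: "0 \<le> g' x" for x
    using f0 g0 by (simp_all add: f'_def g'_def indicator_def)
  have ennreal_f': "ennreal (f' x) = ennreal (f x) * indicator S x"
    and ennreal_g': "ennreal (g' x) = ennreal (g x) * indicator S x" for x
    by (simp_all add: f'_def g'_def indicator_def)
  have f'g': "\<bar>f' x - g' x\<bar> \<le> \<epsilon> * g' x" for x
    using fg by (simp add: f'_def g'_def indicator_def)
  have int_g': "integrable M g'"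
    using fin g'0 by (intro integrableI_nonneg) (simp_all add: ennreal_g')
  have int_f': "integrable M f'"
  proof (rule Bochner_Integration.integrable_bound)
    show "integrable M (\<lambda>x. (1 + \<bar>\<epsilon>\<bar>) * g' x)" using int_g' by simp
    show "AE x in M. norm (f' x) \<le> norm ((1 + \<bar>\<epsilon>\<bar>) * g' x)"
    proof (rule AE_I2)
      fix x
      have "\<epsilon> * g' x \<le> \<bar>\<epsilon>\<bar> * g' x" using g'0 by (simp add: mult_right_mono)
      then show "norm (f' x) \<le> norm ((1 + \<bar>\<epsilon>\<bar>) * g' x)"
        using f'g'[of x] f'0[of x] g'0[of x] by (simp add: abs_le_iff algebra_simps)
    qed
  qed simp
  have "\<bar>integral\<^sup>L M f' - integral\<^sup>L M g'\<bar> = \<bar>LINT x|M. f' x - g' x\<bar>"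
    using int_f' int_g' by simp
  also have "\<dots> \<le> (LINT x|M. \<bar>f' x - g' x\<bar>)"
    using integral_norm_bound[of M "\<lambda>x. f' x - g' x"] by simp
  also have "\<dots> \<le> (LINT x|M. \<epsilon> * g' x)"
    using int_f' int_g' f'g' by (intro integral_mono) auto
  also have "\<dots> = \<epsilon> * integral\<^sup>L M g'" by simp
  finally show ?thesis
    using f'0 g'0 by (simp add: integral_eq_nn_integral ennreal_f' ennreal_g')
qed

lemma Jstar_le:
  assumes cJ: "continuous_on {0..} J" and nn: "\<forall>t\<ge>0. 0 \<le> J t" and bound: "\<forall>t\<ge>0. J t \<le> M"
    and van: "\<forall>t\<ge>K. J t = 0" and "0 \<le> K"
  shows "Jstar TYPE('a::euclidean_space) J l \<le> M * unit_ball_vol (real DIM('a)) * K ^ DIM('a)"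
proof -
  have M: "0 \<le> M" using nn bound by force
  have "Jstar TYPE('a) J l \<le> enn2real (ennreal (M * unit_ball_vol (real DIM('a)) * K ^ DIM('a)))"
    unfolding Jstar_eq_nn_integral[OF cJ nn]
    by (rule enn2real_mono[OF nn_integral_Jstar_le[OF nn bound van \<open>0 \<le> K\<close>]]) simp
  then show ?thesis using M \<open>0 \<le> K\<close> by simp
qed

lemma nn_integral_chord_subst:
  fixes F :: "real \<Rightarrow> real"
  assumes r: "0 < r" and \<rho>: "0 < \<rho>" and "2 * K\<^sup>2 \<le> r * \<rho>"
    and [measurable]: "F \<in> borel_measurable borel" and F_van: "\<And>u. K \<le> u \<Longrightarrow> F u = 0"
  shows "(\<integral>\<^sup>+u. ennreal (F u) * indicator {0..} u \<partial>lborel) =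
    (\<integral>\<^sup>+a. ennreal (F (chord_subst r \<rho> a) * chord_subst_deriv r \<rho> a) * indicator {0..1} a \<partial>lborel)"
proof -
  have K: "K \<le> chord_subst r \<rho> 1" by (rule chord_subst_ge[OF r \<rho> assms(3)]) simp
  have "(\<integral>\<^sup>+u. ennreal (F u) * indicator {0..} u \<partial>lborel) =
      (\<integral>\<^sup>+u. ennreal (F u * indicator {chord_subst r \<rho> 0..chord_subst r \<rho> 1} u) \<partial>lborel)"
    using K F_van by (intro nn_integral_cong) (auto simp: indicator_def chord_subst_def)
  also have "\<dots> = (\<integral>\<^sup>+a. ennreal (F (chord_subst r \<rho> a) * chord_subst_deriv r \<rho> a * indicator {0..1} a) \<partial>lborel)"
  proof (rule nn_integral_substitution)
    show "set_borel_measurable borel {chord_subst r \<rho> 0..chord_subst r \<rho> 1} F"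
      unfolding set_borel_measurable_def by measurable
    show "(chord_subst r \<rho> has_real_derivative chord_subst_deriv r \<rho> a) (at a)" for a
      by (rule has_real_derivative_chord_subst[OF r \<rho>])
  qed (simp_all add: continuous_on_chord_subst_deriv[OF r \<rho>] chord_subst_deriv_nonneg[OF r \<rho>])
  also have "\<dots> = (\<integral>\<^sup>+a. ennreal (F (chord_subst r \<rho> a) * chord_subst_deriv r \<rho> a) * indicator {0..1} a \<partial>lborel)"
    by (intro nn_integral_cong) (simp add: indicator_def)
  finally show ?thesis .
qed

lemma kernel_J_bounded:
  assumes "kernel_J TYPE('a::euclidean_space) J"
  obtains M where "continuous_on {0..} J" "\<forall>t\<ge>0. 0 \<le> J t" "\<forall>t\<ge>0. J t \<le> M" "0 < M"
proof -
  obtain M where M: "\<forall>t\<ge>0. J t \<le> M"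
    using assms unfolding kernel_J_def bounded_iff by (metis abs_le_D1 atLeast_iff image_eqI real_norm_def)
  moreover have "0 < M" using assms M by (force simp: kernel_J_def)
  ultimately show ?thesis using that assms by (simp add: kernel_J_def)
qed

lemma Jtilde_eq_chord_integral:
  fixes x :: "real \<times> 'a::euclidean_space"
  assumes cJ: "continuous_on {0..} J" and nn: "\<forall>t\<ge>0. 0 \<le> J t" and van: "\<forall>t\<ge>K. J t = 0"
    and "K \<le> r" "0 < r" "0 < \<rho>" "2 * K\<^sup>2 \<le> r * \<rho>" "norm x = r"
  defines "m \<equiv> DIM('a)"
  shows "Jtilde J x \<rho> = enn2real (\<integral>\<^sup>+a. ennreal (Jext J (sqrt ((r - \<rho>)\<^sup>2 + (chord_subst r \<rho> a)\<^sup>2)) *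
    (real m * unit_ball_vol (real m)) * zonal_density m \<rho> a) * indicator {0..1} a \<partial>lborel)"
proof -
  have "Jext J (sqrt ((r - \<rho>)\<^sup>2 + (chord_subst r \<rho> a)\<^sup>2)) = 0" if "1 < a" for a
    using chord_subst_ge[OF assms(5-7), of a] that by (intro Jext_sqrt_eq_0[OF van]) simp
  then show ?thesis
    unfolding Jtilde_eq_zonal[OF cJ nn van assms(4,6,8)] chord_subst_dist[OF assms(5,6)] m_def zonal_density_def
    by (intro arg_cong[where f=enn2real] nn_integral_cong)
      (auto simp: indicator_def mult_ac chord_subst_dist[OF assms(5,6)] not_le sphere_area_def)
qed

lemma nn_integral_Jstar_eq_chord_integral:
  assumes cJ: "continuous_on {0..} J" and nn: "\<forall>t\<ge>0. 0 \<le> J t" and van: "\<forall>t\<ge>K. J t = 0"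
    and "0 < r" "0 < \<rho>" "2 * K\<^sup>2 \<le> r * \<rho>"
  defines "m \<equiv> DIM('a::euclidean_space)"
  shows "(\<integral>\<^sup>+x'. ennreal (J (norm (r - \<rho>, x'::'a))) \<partial>lborel) =
    (\<integral>\<^sup>+a. ennreal (Jext J (sqrt ((r - \<rho>)\<^sup>2 + (chord_subst r \<rho> a)\<^sup>2)) *
      (real m * unit_ball_vol (real m)) * chord_density m r \<rho> a) * indicator {0..1} a \<partial>lborel)"
proof -
  define F where "F u = Jext J (sqrt ((r - \<rho>)\<^sup>2 + u\<^sup>2)) * sphere_area m u" for u
  note [measurable] = borel_measurable_Jext[OF cJ]
  have F_meas: "F \<in> borel_measurable borel" unfolding F_def sphere_area_def by measurable
  have F_van: "F u = 0" if "K \<le> u" for u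
    using Jext_sqrt_eq_0[OF van that] by (simp add: F_def)
  have "(\<integral>\<^sup>+u. ennreal (F u) * indicator {0..} u \<partial>lborel) =
      (\<integral>\<^sup>+a. ennreal (F (chord_subst r \<rho> a) * chord_subst_deriv r \<rho> a) * indicator {0..1} a \<partial>lborel)"
    by (rule nn_integral_chord_subst[OF assms(4-6) F_meas F_van])
  then show ?thesis
    unfolding nn_integral_Jstar_radial[OF cJ nn] m_def[symmetric]
    by (simp add: F_def chord_density_def sphere_area_def mult_ac)
qed

lemma Jtilde_Jstar_close:
  fixes x :: "real \<times> 'a::euclidean_space"
  assumes cJ: "continuous_on {0..} J" and nn: "\<forall>t\<ge>0. 0 \<le> J t" and bound: "\<forall>t\<ge>0. J t \<le> M"
    and van: "\<forall>t\<ge>K. J t = 0" and K: "0 < K" and r1: "1 \<le> r" and rK: "2 * (K + K\<^sup>2) \<le> r"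
    and \<rho>r: "\<bar>\<rho> - r\<bar> \<le> K" and x: "norm x = r"
  defines "m \<equiv> DIM('a)"
  shows "\<bar>Jtilde J x \<rho> - Jstar TYPE('a) J (r - \<rho>)\<bar> \<le> 2 ^ (m + 3) * (K + K\<^sup>2) / r * (M * unit_ball_vol (real m) * K ^ m)"
proof -
  note [measurable] = borel_measurable_Jext[OF cJ]
  have r: "0 < r" using r1 by simp
  note radii = annulus_radius_bounds[OF rK \<rho>r K]
  have K_r: "K \<le> r" using radii(1) r by linarith
  have m: "1 \<le> m" unfolding m_def using DIM_positive by (simp add: Suc_le_eq)
  define \<epsilon> where "\<epsilon> = 2 ^ (m + 3) * (K + K\<^sup>2) / r"
  define \<psi> where "\<psi> a = Jext J (sqrt ((r - \<rho>)\<^sup>2 + (chord_subst r \<rho> a)\<^sup>2)) * (real m * unit_ball_vol (real m))" for a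
  have \<psi>: "0 \<le> \<psi> a" for a using nn by (simp add: \<psi>_def Jext_def)
  have [measurable]: "\<psi> \<in> borel_measurable borel"
    unfolding \<psi>_def[abs_def] chord_subst_def chord_scale_def by measurable
  have [measurable]: "zonal_density m \<rho> \<in> borel_measurable borel" "chord_density m r \<rho> \<in> borel_measurable borel"
    unfolding zonal_density_def[abs_def] chord_density_def[abs_def] chord_subst_def chord_subst_deriv_def
      chord_scale_def by measurable
  have close: "\<bar>\<psi> a * zonal_density m \<rho> a - \<psi> a * chord_density m r \<rho> a\<bar> \<le> \<epsilon> * (\<psi> a * chord_density m r \<rho> a)"
    if "a \<in> {0..1}" for a
    using Jext_sqrt_eq_0[OF van, of "chord_subst r \<rho> a"] that \<psi>[of a] unfolding \<epsilon>_def
    by (intro mult_density_close[OF r1 rK \<rho>r K _ m]) (auto simp: \<psi>_def)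
  have Jstar: "(\<integral>\<^sup>+x'. ennreal (J (norm (r - \<rho>, x'::'a))) \<partial>lborel) =
      (\<integral>\<^sup>+a. ennreal (\<psi> a * chord_density m r \<rho> a) * indicator {0..1} a \<partial>lborel)"
    unfolding \<psi>_def m_def by (rule nn_integral_Jstar_eq_chord_integral[OF cJ nn van r radii(3,4)])
  have Jtilde: "Jtilde J x \<rho> = enn2real (\<integral>\<^sup>+a. ennreal (\<psi> a * zonal_density m \<rho> a) * indicator {0..1} a \<partial>lborel)"
    unfolding \<psi>_def m_def by (rule Jtilde_eq_chord_integral[OF cJ nn van K_r r radii(3,4) x])
  have "(\<integral>\<^sup>+x'. ennreal (J (norm (r - \<rho>, x'::'a))) \<partial>lborel) < \<infinity>"
    using nn_integral_Jstar_le[OF nn bound van less_imp_le[OF K], where l = "r - \<rho>" and 'a = 'a]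
    by (rule le_less_trans) simp
  then have "\<bar>Jtilde J x \<rho> - Jstar TYPE('a) J (r - \<rho>)\<bar> \<le> \<epsilon> * Jstar TYPE('a) J (r - \<rho>)"
    unfolding Jtilde Jstar_eq_nn_integral[OF cJ nn] Jstar
    using close \<psi> zonal_density_nonneg[OF less_imp_le[OF radii(3)]] chord_density_nonneg[OF r radii(3)]
    by (intro enn2real_set_nn_integral_close) auto
  also have "\<dots> \<le> \<epsilon> * (M * unit_ball_vol (real m) * K ^ m)"
    unfolding m_def using Jstar_le[OF cJ nn bound van] K r by (intro mult_left_mono) (auto simp: \<epsilon>_def)
  finally show ?thesis by (simp add: \<epsilon>_def)
qed

theorem proposition2p3:
  fixes J :: "real \<Rightarrow> real" and K :: real
  assumes "kernel_J TYPE('a::euclidean_space) J"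
    and "K > 0"
    and "\<forall>r\<ge>K. J r = 0"
  shows "\<exists>L0>0. \<exists>C>0. \<forall>r\<ge>L0. \<forall>x::real \<times> 'a. norm x = r \<longrightarrow>
           (\<forall>\<rho>\<in>{r - K..r + K}. \<bar>Jtilde J x \<rho> - Jstar TYPE('a) J (r - \<rho>)\<bar> \<le> C / r) \<and>
           (\<forall>\<rho>>0. \<rho> \<notin> {r - K..r + K} \<longrightarrow> Jtilde J x \<rho> = 0 \<and> Jstar TYPE('a) J (r - \<rho>) = 0)"
proof -
  obtain M where cJ: "continuous_on {0..} J" and nn: "\<forall>t\<ge>0. 0 \<le> J t"
    and M: "\<forall>t\<ge>0. J t \<le> M" and "0 < M"
    using kernel_J_bounded[OF assms(1)] by blast
  define C where "C = 2 ^ (DIM('a) + 3) * (K + K\<^sup>2) * (M * unit_ball_vol (real DIM('a)) * K ^ DIM('a))"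
  have "0 < C" using \<open>0 < M\<close> assms(2) by (simp add: C_def add_pos_pos)
  show ?thesis
  proof (rule exI[of _ "max 1 (2 * (K + K\<^sup>2))"], intro conjI exI[of _ C] allI impI ballI)
    fix r \<rho> :: real and x :: "real \<times> 'a"
    assume "max 1 (2 * (K + K\<^sup>2)) \<le> r" and x: "norm x = r"
    then have r: "1 \<le> r" "2 * (K + K\<^sup>2) \<le> r" by simp_all
    show "\<bar>Jtilde J x \<rho> - Jstar TYPE('a) J (r - \<rho>)\<bar> \<le> C / r" if "\<rho> \<in> {r - K..r + K}"
      using Jtilde_Jstar_close[OF cJ nn M assms(3,2) r _ x] that by (simp add: C_def abs_le_iff)
    show "Jtilde J x \<rho> = 0" "Jstar TYPE('a) J (r - \<rho>) = 0" if "0 < \<rho>" "\<rho> \<notin> {r - K..r + K}"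
    proof -
      have "K \<le> \<bar>r - \<rho>\<bar>" and "K \<le> r" using that(2) annulus_radius_bounds(1)[OF r(2), of r] assms(2) by auto
      then show "Jtilde J x \<rho> = 0" "Jstar TYPE('a) J (r - \<rho>) = 0"
        using Jtilde_eq_0[OF assms(3) that(1), of x] Jstar_eq_0[OF assms(3)] x by simp_all
    qed
  qed (use \<open>0 < C\<close> in auto)
qed

end
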